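(* Let $(Y_n)_{n\ge1}$ be i.i.d. Gaussian with positive variance. Let $\rho\in(0,1)$ and let $(\alpha_n)_{n\ge0}$ be a sequence of positive numbers such that $\alpha_{n+m}\le C\alpha_n\alpha_m$ for all $n,m\ge0$ (for some constant $C$) and $\lim_{n\to\infty}e^{-\lambda n}\alpha_n=0$ for every $\lambda>0$. Let $X_n:=\sum_{k=1}^n\alpha_{n-k}\rho^{n-k}Y_k$. Then for every $x\in\mathbb{R}$, $$\liminf_{N\to\infty}-N^{-1}\log\mathbb{P}\Big(\sup_{n=1,\dots,N}X_n\le x\Big)>0 .$$ *)

theory Defs
  imports "HOL-Probability.Probability"
begin

end

theory Submission
  imports Defs
begin

(*
  Write X_n = sum_{k=1..n} a_(n-k) Y_k with coefficients a_j = alpha_j * rho^j.  Because alpha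
  grows subexponentially and rho < 1, the coefficients are positive and summable, say with sum S;
  this is all the argument needs.

  The proof is an exponential supermartingale argument.  Reveal the innovations one at a time.
  After n of them, weight the event {X_1 <= x, ..., X_n <= x} by exp (-eps * W_n), where W_n is
  the contribution of Y_1, ..., Y_n to the later values X_(n+1), ..., X_N ("barrier weight").
  Integrating out Y_(n+1) multiplies this weight by a one-step factor depending on the past only
  through its contribution R to X_(n+1) ("barrier factor").  For Gaussian innovations and small
  eps > 0 the factor is at most exp (-eps) uniformly in R, so the persistence probability is at
  most exp (-eps * N).  It is also positive, hence -ln P / N >= eps for all N >= 1.
*)

definition moving_sum :: "(nat \<Rightarrow> real) \<Rightarrow> (nat \<Rightarrow> real) \<Rightarrow> nat \<Rightarrow> real" where
  "moving_sum a y m = (\<Sum>k=1..m. a (m - k) * y k)"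

definition barrier_weight :: "(nat \<Rightarrow> real) \<Rightarrow> real \<Rightarrow> real \<Rightarrow> nat \<Rightarrow> nat \<Rightarrow> (nat \<Rightarrow> real) \<Rightarrow> real" where
  "barrier_weight a x \<epsilon> N n y =
     (if \<forall>m\<in>{1..n}. moving_sum a y m \<le> x
      then exp (- \<epsilon> * (\<Sum>m=n+1..N. \<Sum>k=1..n. a (m - k) * y k)) else 0)"

definition barrier_factor :: "real measure \<Rightarrow> real \<Rightarrow> real \<Rightarrow> real \<Rightarrow> real \<Rightarrow> real \<Rightarrow> ennreal" where
  "barrier_factor Nd a0 x \<epsilon> \<beta> R =
     (\<integral>\<^sup>+t. ennreal (exp (\<epsilon> * R) * (if a0 * t + R \<le> x then exp (- \<beta> * t) else 0)) \<partial>Nd)"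

text \<open>
  On a product of copies of the real line every coordinate is measurable, also outside the
  index set, where it is constant on the product space.
\<close>
lemma measurable_PiM_coordinate:
  fixes Nd :: "real measure"
  assumes "sets Nd = sets borel"
  shows "(\<lambda>y. y k) \<in> borel_measurable (PiM I (\<lambda>_. Nd))"
proof (cases "k \<in> I")
  case True
  then have "(\<lambda>y. y k) \<in> measurable (PiM I (\<lambda>_. Nd)) Nd" by (rule measurable_component_singleton)
  then show ?thesis by (simp add: measurable_cong_sets[OF refl assms])
next
  case False
  have "(\<lambda>_. undefined :: real) \<in> borel_measurable (PiM I (\<lambda>_. Nd))" by simp
  then show ?thesis
    by (rule measurable_cong[THEN iffD1, rotated]) (use False in \<open>auto simp: space_PiM PiE_def extensional_def\<close>)
qed

lemma measurable_barrier_weight: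
  fixes Nd :: "real measure"
  assumes "sets Nd = sets borel"
  shows "barrier_weight a x \<epsilon> N n \<in> borel_measurable (PiM I (\<lambda>_. Nd))"
  unfolding barrier_weight_def moving_sum_def
  using measurable_PiM_coordinate[OF assms] by measurable

lemma barrier_weight_step:
  fixes a y :: "nat \<Rightarrow> real" and x \<epsilon> t :: real and n N :: nat
  defines "R \<equiv> \<Sum>k=1..n. a (Suc n - k) * y k"
    and "\<beta> \<equiv> \<epsilon> * (\<Sum>m=Suc n+1..N. a (m - Suc n))"
  assumes "Suc n \<le> N"
  shows "barrier_weight a x \<epsilon> N (Suc n) (y(Suc n := t))
       = barrier_weight a x \<epsilon> N n y * (exp (\<epsilon> * R) * (if a 0 * t + R \<le> x then exp (- \<beta> * t) else 0))"
proof -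
  define y' where "y' = y(Suc n := t)"
  define E where "E = (\<Sum>m=Suc n+1..N. \<Sum>k=1..n. a (m - k) * y k)"
  define B where "B = (\<Sum>m=Suc n+1..N. a (m - Suc n))"
  have past: "(\<Sum>k=1..n. a (m - k) * y' k) = (\<Sum>k=1..n. a (m - k) * y k)" for m
    by (intro sum.cong) (auto simp: y'_def)
  have reveal: "(\<Sum>k=1..Suc n. a (m - k) * y' k) = (\<Sum>k=1..n. a (m - k) * y k) + a (m - Suc n) * t" for m
    by (simp add: past y'_def)
  have old: "moving_sum a y' m = moving_sum a y m" if "m \<le> n" for m
    unfolding moving_sum_def using that by (intro sum.cong) (auto simp: y'_def)
  have new: "moving_sum a y' (Suc n) = a 0 * t + R"
    unfolding moving_sum_def reveal R_def by simp
  have barrier: "(\<forall>m\<in>{1..Suc n}. moving_sum a y' m \<le> x)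
      \<longleftrightarrow> (\<forall>m\<in>{1..n}. moving_sum a y m \<le> x) \<and> a 0 * t + R \<le> x"
  proof -
    have "{1..Suc n} = insert (Suc n) {1..n}" by auto
    then show ?thesis using old new by auto
  qed
  have load_new: "(\<Sum>m=Suc n+1..N. \<Sum>k=1..Suc n. a (m - k) * y' k) = E + t * B"
    unfolding reveal E_def B_def by (simp add: sum.distrib sum_distrib_left mult.commute)
  have load_old: "(\<Sum>m=n+1..N. \<Sum>k=1..n. a (m - k) * y k) = R + E"
    unfolding R_def E_def using assms(3) by (simp add: sum.atLeast_Suc_atMost)
  have "exp (- \<epsilon> * (E + t * B)) = exp (- \<epsilon> * (R + E)) * (exp (\<epsilon> * R) * exp (- \<beta> * t))"
    unfolding \<beta>_def B_def[symmetric] by (simp add: exp_add[symmetric] algebra_simps)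
  then show ?thesis
    unfolding barrier_weight_def y'_def[symmetric] barrier load_new load_old by simp
qed

lemma nn_integral_barrier_weight_Suc:
  fixes Nd :: "real measure" and a :: "nat \<Rightarrow> real"
  assumes Nd: "prob_space Nd" "sets Nd = sets borel" and n: "Suc n \<le> N"
  shows "(\<integral>\<^sup>+y. ennreal (barrier_weight a x \<epsilon> N (Suc n) y) \<partial>PiM {1..Suc n} (\<lambda>_. Nd))
       = (\<integral>\<^sup>+y. ennreal (barrier_weight a x \<epsilon> N n y)
            * barrier_factor Nd (a 0) x \<epsilon> (\<epsilon> * (\<Sum>m=Suc n+1..N. a (m - Suc n))) (\<Sum>k=1..n. a (Suc n - k) * y k)
          \<partial>PiM {1..n} (\<lambda>_. Nd))"
proof -
  interpret product_sigma_finite "\<lambda>_. Nd"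
    unfolding product_sigma_finite_def using Nd(1) by (simp add: prob_space_imp_sigma_finite)
  have W_meas: "(\<lambda>y. ennreal (barrier_weight a x \<epsilon> N (Suc n) y)) \<in> borel_measurable (PiM {1..Suc n} (\<lambda>_. Nd))"
    using measurable_barrier_weight[OF Nd(2)] by measurable
  have "{1..Suc n} = insert (Suc n) {1..n}" by auto
  then have "(\<integral>\<^sup>+y. ennreal (barrier_weight a x \<epsilon> N (Suc n) y) \<partial>PiM {1..Suc n} (\<lambda>_. Nd))
      = (\<integral>\<^sup>+y. (\<integral>\<^sup>+t. ennreal (barrier_weight a x \<epsilon> N (Suc n) (y(Suc n := t))) \<partial>Nd) \<partial>PiM {1..n} (\<lambda>_. Nd))"
    using W_meas by (simp add: product_nn_integral_insert)
  also have "\<dots> = (\<integral>\<^sup>+y. ennreal (barrier_weight a x \<epsilon> N n y)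
      * barrier_factor Nd (a 0) x \<epsilon> (\<epsilon> * (\<Sum>m=Suc n+1..N. a (m - Suc n))) (\<Sum>k=1..n. a (Suc n - k) * y k)
      \<partial>PiM {1..n} (\<lambda>_. Nd))"
    unfolding barrier_weight_step[OF n] barrier_factor_def
    by (intro nn_integral_cong, subst nn_integral_cmult[symmetric])
      (auto simp: ennreal_mult barrier_weight_def measurable_cong_sets[OF Nd(2) refl])
  finally show ?thesis .
qed

lemma nn_integral_barrier_weight:
  fixes Nd :: "real measure" and a :: "nat \<Rightarrow> real"
  assumes Nd: "prob_space Nd" "sets Nd = sets borel" and \<theta>: "\<theta> \<ge> 0"
    and step: "\<And>n R. n \<in> {1..N} \<Longrightarrow> barrier_factor Nd (a 0) x \<epsilon> (\<epsilon> * (\<Sum>m=n+1..N. a (m - n))) R \<le> ennreal \<theta>"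
  shows "n \<le> N \<Longrightarrow> (\<integral>\<^sup>+y. ennreal (barrier_weight a x \<epsilon> N n y) \<partial>PiM {1..n} (\<lambda>_. Nd)) \<le> ennreal (\<theta> ^ n)"
proof (induction n)
  case 0
  interpret P0: prob_space "PiM {} (\<lambda>_. Nd)" by (rule prob_space_PiM) (use Nd in auto)
  show ?case by (simp add: barrier_weight_def P0.emeasure_space_1)
next
  case (Suc n)
  have W_meas: "(\<lambda>y. ennreal (barrier_weight a x \<epsilon> N n y)) \<in> borel_measurable (PiM {1..n} (\<lambda>_. Nd))"
    using measurable_barrier_weight[OF Nd(2)] by measurable
  have "(\<integral>\<^sup>+y. ennreal (barrier_weight a x \<epsilon> N (Suc n) y) \<partial>PiM {1..Suc n} (\<lambda>_. Nd))
      \<le> (\<integral>\<^sup>+y. ennreal (barrier_weight a x \<epsilon> N n y) * ennreal \<theta> \<partial>PiM {1..n} (\<lambda>_. Nd))"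
    unfolding nn_integral_barrier_weight_Suc[OF Nd Suc.prems]
    using step Suc.prems by (intro nn_integral_mono mult_left_mono) auto
  also have "\<dots> = ennreal \<theta> * (\<integral>\<^sup>+y. ennreal (barrier_weight a x \<epsilon> N n y) \<partial>PiM {1..n} (\<lambda>_. Nd))"
    by (subst nn_integral_multc[OF W_meas]) (simp add: mult.commute)
  also have "\<dots> \<le> ennreal \<theta> * ennreal (\<theta> ^ n)"
    using Suc.IH Suc.prems by (intro mult_left_mono) auto
  also have "\<dots> = ennreal (\<theta> ^ Suc n)" using \<theta> by (simp add: ennreal_mult)
  finally show ?case .
qed

text \<open>At the last step the barrier weight is the indicator of the barrier event.\<close>
lemma measure_barrier_event_le:
  fixes Nd :: "real measure" and a :: "nat \<Rightarrow> real"
  assumes Nd: "prob_space Nd" "sets Nd = sets borel" and \<theta>: "\<theta> \<ge> 0"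
    and step: "\<And>n R. n \<in> {1..N} \<Longrightarrow> barrier_factor Nd (a 0) x \<epsilon> (\<epsilon> * (\<Sum>m=n+1..N. a (m - n))) R \<le> ennreal \<theta>"
  shows "measure (PiM {1..N} (\<lambda>_. Nd))
      {y \<in> space (PiM {1..N} (\<lambda>_. Nd)). \<forall>m\<in>{1..N}. moving_sum a y m \<le> x} \<le> \<theta> ^ N"
proof -
  interpret P: prob_space "PiM {1..N} (\<lambda>_. Nd)" by (intro prob_space_PiM Nd(1))
  define A where "A = {y \<in> space (PiM {1..N} (\<lambda>_. Nd)). \<forall>m\<in>{1..N}. moving_sum a y m \<le> x}"
  have "A \<in> sets (PiM {1..N} (\<lambda>_. Nd))"
    unfolding A_def moving_sum_def using measurable_PiM_coordinate[OF Nd(2)] by measurable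
  have "ennreal (measure (PiM {1..N} (\<lambda>_. Nd)) A) = emeasure (PiM {1..N} (\<lambda>_. Nd)) A"
    by (rule P.emeasure_eq_measure[symmetric])
  also have "\<dots> = (\<integral>\<^sup>+y. indicator A y \<partial>PiM {1..N} (\<lambda>_. Nd))"
    using \<open>A \<in> sets (PiM {1..N} (\<lambda>_. Nd))\<close> by simp
  also have "\<dots> = (\<integral>\<^sup>+y. ennreal (barrier_weight a x \<epsilon> N N y) \<partial>PiM {1..N} (\<lambda>_. Nd))"
    by (intro nn_integral_cong) (simp add: A_def barrier_weight_def indicator_def)
  also have "\<dots> \<le> ennreal (\<theta> ^ N)" by (rule nn_integral_barrier_weight[OF Nd \<theta> step]) auto
  finally show ?thesis using \<theta> unfolding A_def by simp
qed

lemma moving_sum_le_of_innovations_le: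
  fixes a y :: "nat \<Rightarrow> real"
  assumes a: "\<And>j. a j \<ge> 0" and c: "c \<le> 0" "a 0 * c \<le> x"
    and y: "\<And>k. k \<in> {1..m} \<Longrightarrow> y k \<le> c" and m: "m \<ge> 1"
  shows "moving_sum a y m \<le> x"
proof -
  have "moving_sum a y m = a 0 * y m + (\<Sum>k\<in>{1..m} - {m}. a (m - k) * y k)"
    unfolding moving_sum_def using m by (subst sum.remove[of _ m]) auto
  also have "(\<Sum>k\<in>{1..m} - {m}. a (m - k) * y k) \<le> 0"
    using y c a by (intro sum_nonpos mult_nonneg_nonpos) force+
  also have "a 0 * y m \<le> a 0 * c" using y[of m] m a[of 0] by (simp add: mult_left_mono)
  finally show ?thesis using c by simp
qed

text \<open>
  The barrier event has positive probability: it contains the event that all innovations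
  lie below a suitable level \<open>c \<le> 0\<close>, because the coefficients are nonnegative.
\<close>
lemma measure_barrier_event_pos:
  fixes Nd :: "real measure" and a :: "nat \<Rightarrow> real"
  assumes Nd: "prob_space Nd" "sets Nd = sets borel" and tail: "\<And>c. emeasure Nd {..c} > 0"
    and a: "\<And>j. a j \<ge> 0" "a 0 > 0"
  shows "measure (PiM {1..N} (\<lambda>_. Nd)) {y \<in> space (PiM {1..N} (\<lambda>_. Nd)). \<forall>m\<in>{1..N}. moving_sum a y m \<le> x} > 0"
proof -
  define P where "P = PiM {1..N} (\<lambda>_. Nd)"
  define c where "c = min 0 (x / a 0)"
  define A where "A = {y \<in> space P. \<forall>m\<in>{1..N}. moving_sum a y m \<le> x}"
  interpret P: prob_space P unfolding P_def by (intro prob_space_PiM Nd(1))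
  interpret product_sigma_finite "\<lambda>_. Nd"
    unfolding product_sigma_finite_def using Nd(1) by (simp add: prob_space_imp_sigma_finite)
  have c: "c \<le> 0" "a 0 * c \<le> x"
  proof -
    show "c \<le> 0" by (simp add: c_def)
    have "a 0 * c \<le> a 0 * (x / a 0)" using a(2) by (intro mult_left_mono) (auto simp: c_def)
    then show "a 0 * c \<le> x" using a(2) by simp
  qed
  have A_sets: "A \<in> sets P"
    unfolding A_def P_def moving_sum_def using measurable_PiM_coordinate[OF Nd(2)] by measurable
  have "PiE {1..N} (\<lambda>_. {..c}) \<subseteq> A"
  proof
    fix y assume y: "y \<in> PiE {1..N} (\<lambda>_. {..c})"
    have "space Nd = UNIV" using sets_eq_imp_space_eq[OF Nd(2)] by simp
    then have "y \<in> space P" using y by (auto simp: P_def space_PiM)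
    moreover have "moving_sum a y m \<le> x" if "m \<in> {1..N}" for m
      using that y a c by (intro moving_sum_le_of_innovations_le) auto
    ultimately show "y \<in> A" by (simp add: A_def)
  qed
  then have "emeasure P (PiE {1..N} (\<lambda>_. {..c})) \<le> emeasure P A"
    using A_sets by (intro emeasure_mono) auto
  moreover have "emeasure P (PiE {1..N} (\<lambda>_. {..c})) = emeasure Nd {..c} ^ N"
    unfolding P_def by (subst emeasure_PiM) (auto simp: Nd(2))
  moreover have "emeasure Nd {..c} ^ N \<noteq> 0" using tail[of c] by simp
  ultimately have "emeasure P A \<noteq> 0" by (metis le_zero_eq)
  then have "measure P A \<noteq> 0" by (simp add: P.emeasure_eq_measure)
  then show ?thesis using measure_nonneg[of P A] unfolding A_def P_def by linarith
qed

lemma normal_density_tilt: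
  fixes \<mu> \<sigma> g t :: real
  assumes "\<sigma> > 0"
  shows "exp (- g * t) * normal_density \<mu> \<sigma> t
       = exp (- g * \<mu> + g^2 * \<sigma>^2 / 2) * normal_density (\<mu> - g * \<sigma>^2) \<sigma> t"
proof -
  have "- g * t + (- (t - \<mu>)\<^sup>2 / (2 * \<sigma>\<^sup>2))
      = (- g * \<mu> + g^2 * \<sigma>^2 / 2) + (- (t - (\<mu> - g * \<sigma>^2))\<^sup>2 / (2 * \<sigma>\<^sup>2))"
    using assms by (simp add: field_simps power2_eq_square)
  then show ?thesis
    unfolding normal_density_def by (simp add: exp_add[symmetric] algebra_simps)
qed

lemma nn_integral_normal_tilt:
  fixes \<mu> \<sigma> g :: real and f :: "real \<Rightarrow> ennreal"
  assumes "\<sigma> > 0" and [measurable]: "f \<in> borel_measurable borel"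
  shows "(\<integral>\<^sup>+t. f t * ennreal (exp (- g * t)) \<partial>density lborel (normal_density \<mu> \<sigma>))
       = ennreal (exp (- g * \<mu> + g^2 * \<sigma>^2 / 2))
         * (\<integral>\<^sup>+t. f t \<partial>density lborel (normal_density (\<mu> - g * \<sigma>^2) \<sigma>))"
proof -
  have "(\<integral>\<^sup>+t. f t * ennreal (exp (- g * t)) \<partial>density lborel (normal_density \<mu> \<sigma>))
      = (\<integral>\<^sup>+t. ennreal (exp (- g * t) * normal_density \<mu> \<sigma> t) * f t \<partial>lborel)"
    by (subst nn_integral_density) (auto simp: ennreal_mult mult_ac)
  also have "\<dots> = (\<integral>\<^sup>+t. ennreal (exp (- g * \<mu> + g^2 * \<sigma>^2 / 2))
                    * (ennreal (normal_density (\<mu> - g * \<sigma>^2) \<sigma> t) * f t) \<partial>lborel)"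
  proof (intro nn_integral_cong)
    fix t
    show "ennreal (exp (- g * t) * normal_density \<mu> \<sigma> t) * f t
        = ennreal (exp (- g * \<mu> + g^2 * \<sigma>^2 / 2)) * (ennreal (normal_density (\<mu> - g * \<sigma>^2) \<sigma> t) * f t)"
      unfolding normal_density_tilt[OF assms(1)] by (simp add: ennreal_mult mult_ac)
  qed
  also have "\<dots> = ennreal (exp (- g * \<mu> + g^2 * \<sigma>^2 / 2))
                  * (\<integral>\<^sup>+t. f t \<partial>density lborel (normal_density (\<mu> - g * \<sigma>^2) \<sigma>))"
    by (subst nn_integral_cmult) (auto simp: nn_integral_density)
  finally show ?thesis .
qed

lemma emeasure_normal_atMost_shift:
  fixes m d v \<sigma> :: real
  shows "emeasure (density lborel (normal_density m \<sigma>)) {..v}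
       = emeasure (density lborel (normal_density (m + d) \<sigma>)) {..v + d}"
proof -
  have "emeasure (density lborel (normal_density (m + d) \<sigma>)) {..v + d}
      = (\<integral>\<^sup>+t. ennreal (normal_density (m + d) \<sigma> t) * indicator {..v + d} t \<partial>lborel)"
    by (simp add: emeasure_density)
  also have "\<dots> = (\<integral>\<^sup>+t. ennreal (normal_density (m + d) \<sigma> (d + 1 * t)) * indicator {..v + d} (d + 1 * t) \<partial>lborel)"
    by (subst nn_integral_real_affine[where c=1 and t=d]) auto
  also have "\<dots> = (\<integral>\<^sup>+t. ennreal (normal_density m \<sigma> t) * indicator {..v} t \<partial>lborel)"
    by (intro nn_integral_cong) (simp add: normal_density_def indicator_def)
  finally show ?thesis by (simp add: emeasure_density)
qed

lemma emeasure_normal_Ioo_pos: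
  fixes m \<sigma> a b :: real
  assumes "\<sigma> > 0" "a < b"
  shows "emeasure (density lborel (normal_density m \<sigma>)) {a<..<b} > 0"
proof (rule ccontr)
  assume "\<not> ?thesis"
  then have "(\<integral>\<^sup>+t. ennreal (normal_density m \<sigma> t) * indicator {a<..<b} t \<partial>lborel) = 0"
    by (simp add: emeasure_density)
  then have "AE t in lborel. ennreal (normal_density m \<sigma> t) * indicator {a<..<b} t = 0"
    by (subst (asm) nn_integral_0_iff_AE) auto
  then have "AE t in lborel. t \<notin> {a<..<b}"
    using normal_density_pos[OF assms(1)]
    by (elim AE_mp) (auto simp: indicator_def less_le)
  then have "emeasure lborel {t \<in> space lborel. \<not> t \<notin> {a<..<b}} = 0"
    by (subst (asm) AE_iff_measurable[OF _ refl]) auto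
  moreover have "{t \<in> space lborel. \<not> t \<notin> {a<..<b}} = {a<..<b}" by auto
  ultimately show False using assms by simp
qed

lemma measure_normal_atMost_bounds:
  fixes m \<sigma> v :: real
  assumes "\<sigma> > 0"
  shows "0 < measure (density lborel (normal_density m \<sigma>)) {..v}"
    and "measure (density lborel (normal_density m \<sigma>)) {..v} < 1"
proof -
  define N where "N = density lborel (normal_density m \<sigma>)"
  interpret N: prob_space N unfolding N_def by (rule prob_space_normal_density[OF assms])
  have Ioo: "0 < measure N {a<..<b}" if "a < b" for a b
    using emeasure_normal_Ioo_pos[OF assms that, of m]
    unfolding N_def[symmetric] by (simp add: N.emeasure_eq_measure)
  have "measure N {v - 1<..<v} \<le> measure N {..v}"
    by (intro N.finite_measure_mono) (auto simp: N_def)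
  with Ioo[of "v - 1" v] show "0 < measure N {..v}" by simp
  have "measure N {..v} + measure N {v<..<v + 1} = measure N ({..v} \<union> {v<..<v + 1})"
    by (intro N.finite_measure_Union[symmetric]) (auto simp: N_def)
  also have "\<dots> \<le> 1" by simp
  finally show "measure N {..v} < 1" using Ioo[of v "v + 1"] by simp
qed

lemma gaussian_exponent_small:
  fixes g \<epsilon> S \<mu> \<sigma> :: real
  assumes "0 \<le> g" "g \<le> \<epsilon> * S" "\<epsilon> > 0" "\<epsilon> * (S^2 * \<sigma>^2 / 2) \<le> 1"
  shows "- g * \<mu> + g^2 * \<sigma>^2 / 2 \<le> \<epsilon> * (S * \<bar>\<mu>\<bar>) + \<epsilon>"
proof -
  have "g * (- \<mu>) \<le> g * \<bar>\<mu>\<bar>" using assms(1) by (intro mult_left_mono) auto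
  then have "- g * \<mu> \<le> g * \<bar>\<mu>\<bar>" by simp
  also have "\<dots> \<le> \<epsilon> * S * \<bar>\<mu>\<bar>" using assms(2) by (simp add: mult_right_mono)
  finally have lin: "- g * \<mu> \<le> \<epsilon> * (S * \<bar>\<mu>\<bar>)" by simp
  have "g^2 * \<sigma>^2 / 2 \<le> (\<epsilon> * S)^2 * \<sigma>^2 / 2"
    using assms(1,2) by (intro divide_right_mono mult_right_mono power_mono) auto
  also have "\<dots> = \<epsilon> * (\<epsilon> * (S^2 * \<sigma>^2 / 2))" by (simp add: power2_eq_square)
  also have "\<dots> \<le> \<epsilon>" using assms(3,4) by (simp add: mult_left_le)
  finally show ?thesis using lin by linarith
qed

text \<open>Ignoring the barrier: the factor is at most \<open>exp (\<epsilon> * R)\<close> times a Gaussian Laplace transform.\<close>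
lemma barrier_factor_normal_le_laplace:
  fixes \<mu> \<sigma> a0 x \<epsilon> \<beta> R :: real
  assumes \<sigma>: "\<sigma> > 0"
  shows "barrier_factor (density lborel (normal_density \<mu> \<sigma>)) a0 x \<epsilon> \<beta> R
       \<le> ennreal (exp (\<epsilon> * R - \<beta> * \<mu> + \<beta>^2 * \<sigma>^2 / 2))"
proof -
  define N' where "N' = density lborel (normal_density (\<mu> - \<beta> * \<sigma>^2) \<sigma>)"
  interpret N': prob_space N' unfolding N'_def by (rule prob_space_normal_density[OF \<sigma>])
  have "barrier_factor (density lborel (normal_density \<mu> \<sigma>)) a0 x \<epsilon> \<beta> R
      \<le> (\<integral>\<^sup>+t. ennreal (exp (\<epsilon> * R)) * ennreal (exp (- \<beta> * t)) \<partial>density lborel (normal_density \<mu> \<sigma>))"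
    unfolding barrier_factor_def by (intro nn_integral_mono) (auto simp: ennreal_mult[symmetric])
  also have "\<dots> = ennreal (exp (- \<beta> * \<mu> + \<beta>^2 * \<sigma>^2 / 2)) * (\<integral>\<^sup>+t. ennreal (exp (\<epsilon> * R)) \<partial>N')"
    unfolding N'_def by (rule nn_integral_normal_tilt[OF \<sigma>]) simp
  also have "\<dots> = ennreal (exp (\<epsilon> * R - \<beta> * \<mu> + \<beta>^2 * \<sigma>^2 / 2))"
    by (simp add: N'.emeasure_space_1 ennreal_mult[symmetric] exp_add[symmetric] algebra_simps)
  finally show ?thesis .
qed

text \<open>
  Using the barrier: it confines the innovation to the half-line \<open>t \<le> (x - R) / a0\<close>,
  where \<open>exp (\<epsilon> * R) \<le> exp (\<epsilon> * (x - a0 * t))\<close>; tilting turns this into a Gaussian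
  half-line probability.
\<close>
lemma barrier_factor_normal_le_tilted:
  fixes \<mu> \<sigma> a0 x \<epsilon> \<beta> R :: real
  defines "\<gamma> \<equiv> \<beta> + \<epsilon> * a0"
  assumes \<sigma>: "\<sigma> > 0" and a0: "a0 > 0" and \<epsilon>: "\<epsilon> \<ge> 0"
  shows "barrier_factor (density lborel (normal_density \<mu> \<sigma>)) a0 x \<epsilon> \<beta> R
       \<le> ennreal (exp (\<epsilon> * x - \<gamma> * \<mu> + \<gamma>^2 * \<sigma>^2 / 2)
           * measure (density lborel (normal_density \<mu> \<sigma>)) {..(x - R) / a0 + \<gamma> * \<sigma>^2})"
proof -
  define N where "N = density lborel (normal_density \<mu> \<sigma>)"
  define u where "u = (x - R) / a0"
  interpret N: prob_space N unfolding N_def by (rule prob_space_normal_density[OF \<sigma>])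
  have pointwise: "ennreal (exp (\<epsilon> * R) * (if a0 * t + R \<le> x then exp (- \<beta> * t) else 0))
      \<le> ennreal (exp (\<epsilon> * x)) * (indicator {..u} t * ennreal (exp (- \<gamma> * t)))" for t
  proof (cases "a0 * t + R \<le> x")
    case True
    then have "t \<le> u" using a0 by (simp add: u_def field_simps)
    have "\<epsilon> * (a0 * t + R) \<le> \<epsilon> * x" using True \<epsilon> by (intro mult_left_mono) auto
    then have "\<epsilon> * R + - \<beta> * t \<le> \<epsilon> * x + - \<gamma> * t" unfolding \<gamma>_def by (simp add: algebra_simps)
    then have "exp (\<epsilon> * R) * exp (- \<beta> * t) \<le> exp (\<epsilon> * x) * exp (- \<gamma> * t)"
      by (simp only: exp_add[symmetric]) simp
    with True \<open>t \<le> u\<close> show ?thesis by (simp add: ennreal_mult[symmetric])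
  qed simp
  have "barrier_factor N a0 x \<epsilon> \<beta> R
      \<le> (\<integral>\<^sup>+t. ennreal (exp (\<epsilon> * x)) * (indicator {..u} t * ennreal (exp (- \<gamma> * t))) \<partial>N)"
    unfolding barrier_factor_def by (rule nn_integral_mono) (rule pointwise)
  also have "\<dots> = ennreal (exp (\<epsilon> * x)) * (\<integral>\<^sup>+t. indicator {..u} t * ennreal (exp (- \<gamma> * t)) \<partial>N)"
    by (rule nn_integral_cmult) (simp add: N_def)
  also have "(\<integral>\<^sup>+t. indicator {..u} t * ennreal (exp (- \<gamma> * t)) \<partial>N)
      = ennreal (exp (- \<gamma> * \<mu> + \<gamma>^2 * \<sigma>^2 / 2))
        * emeasure (density lborel (normal_density (\<mu> - \<gamma> * \<sigma>^2) \<sigma>)) {..u}"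
    unfolding N_def by (subst nn_integral_normal_tilt[OF \<sigma>]) auto
  also have "emeasure (density lborel (normal_density (\<mu> - \<gamma> * \<sigma>^2) \<sigma>)) {..u} = emeasure N {..u + \<gamma> * \<sigma>^2}"
    using emeasure_normal_atMost_shift[of "\<mu> - \<gamma> * \<sigma>^2" \<sigma> u "\<gamma> * \<sigma>^2"] by (simp add: N_def)
  finally have "barrier_factor N a0 x \<epsilon> \<beta> R \<le> ennreal (exp (\<epsilon> * x))
      * (ennreal (exp (- \<gamma> * \<mu> + \<gamma>^2 * \<sigma>^2 / 2)) * ennreal (measure N {..u + \<gamma> * \<sigma>^2}))"
    by (simp add: N.emeasure_eq_measure)
  moreover have "exp (\<epsilon> * x - \<gamma> * \<mu> + \<gamma>^2 * \<sigma>^2 / 2) = exp (\<epsilon> * x) * exp (- \<gamma> * \<mu> + \<gamma>^2 * \<sigma>^2 / 2)"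
    by (simp add: exp_add[symmetric])
  ultimately show ?thesis
    by (simp add: N_def[symmetric] u_def ennreal_mult[symmetric] mult.assoc)
qed

text \<open>
  If the past contribution \<open>R\<close> is far below the barrier the factor \<open>exp (\<epsilon> * R)\<close> is
  small; otherwise the barrier confines the innovation to a half-line of Gaussian probability
  bounded away from one.
\<close>
lemma gaussian_barrier_step:
  fixes \<mu> \<sigma> a0 S x \<epsilon> \<beta> R :: real
  defines "N \<equiv> density lborel (normal_density \<mu> \<sigma>)"
    and "D \<equiv> \<bar>x\<bar> + S * \<bar>\<mu>\<bar>"
  assumes \<sigma>: "\<sigma> > 0" and a0: "a0 > 0" and \<epsilon>: "\<epsilon> > 0"
    and \<beta>: "0 \<le> \<beta>" "\<beta> + \<epsilon> * a0 \<le> \<epsilon> * S"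
    and small: "\<epsilon> * S \<le> 1" "\<epsilon> * (S^2 * \<sigma>^2 / 2) \<le> 1"
    and cdf: "exp (\<epsilon> * (D + 2)) * measure N {..(D + 2) / a0 + \<sigma>^2} \<le> 1"
  shows "barrier_factor N a0 x \<epsilon> \<beta> R \<le> ennreal (exp (- \<epsilon>))"
proof (cases "R \<le> x - (D + 2)")
  case True
  have "\<beta> \<le> \<epsilon> * S" using \<beta>(2) mult_pos_pos[OF \<epsilon> a0] by linarith
  then have "- \<beta> * \<mu> + \<beta>^2 * \<sigma>^2 / 2 \<le> \<epsilon> * (S * \<bar>\<mu>\<bar>) + \<epsilon>"
    using gaussian_exponent_small[OF \<beta>(1) _ \<epsilon> small(2)] by simp
  moreover have "\<epsilon> * R \<le> \<epsilon> * (\<bar>x\<bar> - (D + 2))" using True \<epsilon> by (intro mult_left_mono) auto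
  ultimately have "\<epsilon> * R - \<beta> * \<mu> + \<beta>^2 * \<sigma>^2 / 2 \<le> - \<epsilon>" by (simp add: D_def algebra_simps)
  then show ?thesis
    using barrier_factor_normal_le_laplace[OF \<sigma>, of \<mu> a0 x \<epsilon> \<beta> R] unfolding N_def
    by (elim order_trans) simp
next
  case False
  define \<gamma> where "\<gamma> = \<beta> + \<epsilon> * a0"
  define q where "q = measure N {..(D + 2) / a0 + \<sigma>^2}"
  interpret N: prob_space N unfolding N_def by (rule prob_space_normal_density[OF \<sigma>])
  have \<gamma>: "0 \<le> \<gamma>" "\<gamma> \<le> \<epsilon> * S" using \<beta> \<epsilon> a0 by (simp_all add: \<gamma>_def)
  have "(x - R) / a0 \<le> (D + 2) / a0" using False a0 by (simp add: divide_right_mono)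
  moreover have "\<gamma> * \<sigma>^2 \<le> 1 * \<sigma>^2" using \<gamma> small(1) by (intro mult_right_mono) auto
  ultimately have "measure N {..(x - R) / a0 + \<gamma> * \<sigma>^2} \<le> q"
    unfolding q_def by (intro N.finite_measure_mono) (auto simp: N_def)
  moreover have "exp (\<epsilon> * x - \<gamma> * \<mu> + \<gamma>^2 * \<sigma>^2 / 2) \<le> exp (- \<epsilon>) * exp (\<epsilon> * (D + 2))"
  proof -
    have "\<epsilon> * x \<le> \<epsilon> * \<bar>x\<bar>" using \<epsilon> by (intro mult_left_mono) auto
    then have "\<epsilon> * x - \<gamma> * \<mu> + \<gamma>^2 * \<sigma>^2 / 2 \<le> - \<epsilon> + \<epsilon> * (D + 2)"
      using gaussian_exponent_small[OF \<gamma> \<epsilon> small(2), of \<mu>] by (simp add: D_def algebra_simps)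
    then show ?thesis by (simp add: exp_add[symmetric])
  qed
  ultimately have "exp (\<epsilon> * x - \<gamma> * \<mu> + \<gamma>^2 * \<sigma>^2 / 2) * measure N {..(x - R) / a0 + \<gamma> * \<sigma>^2}
      \<le> (exp (- \<epsilon>) * exp (\<epsilon> * (D + 2))) * q"
    by (intro mult_mono) auto
  also have "\<dots> = exp (- \<epsilon>) * (exp (\<epsilon> * (D + 2)) * q)" by (rule mult.assoc)
  also have "\<dots> \<le> exp (- \<epsilon>)" using cdf by (simp add: q_def mult_left_le)
  finally show ?thesis
    using barrier_factor_normal_le_tilted[OF \<sigma> a0 less_imp_le[OF \<epsilon>], of \<mu> x \<beta> R]
    unfolding N_def[symmetric] \<gamma>_def[symmetric] by (elim order_trans) simp
qed

lemma gaussian_barrier_rate: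
  fixes \<mu> \<sigma> a0 S x :: real
  assumes \<sigma>: "\<sigma> > 0" and a0: "a0 > 0" and S: "S \<ge> 0"
  obtains \<epsilon> where "\<epsilon> > 0"
    and "\<And>\<beta> R. 0 \<le> \<beta> \<Longrightarrow> \<beta> + \<epsilon> * a0 \<le> \<epsilon> * S \<Longrightarrow>
      barrier_factor (density lborel (normal_density \<mu> \<sigma>)) a0 x \<epsilon> \<beta> R \<le> ennreal (exp (- \<epsilon>))"
proof -
  define D where "D = \<bar>x\<bar> + S * \<bar>\<mu>\<bar>"
  define q where "q = measure (density lborel (normal_density \<mu> \<sigma>)) {..(D + 2) / a0 + \<sigma>^2}"
  define K2 where "K2 = S^2 * \<sigma>^2 / 2"
  define r where "r = - ln q"
  define \<epsilon> where "\<epsilon> = min (1 / (S + 1)) (min (1 / (K2 + 1)) (r / (D + 2)))"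
  have q: "0 < q" "q < 1" unfolding q_def using measure_normal_atMost_bounds[OF \<sigma>] by auto
  have D: "D \<ge> 0" using S by (simp add: D_def)
  have K2: "K2 \<ge> 0" by (simp add: K2_def)
  have "r > 0" using q by (simp add: r_def)
  then have \<epsilon>: "\<epsilon> > 0" using D S K2 by (simp add: \<epsilon>_def)
  have "\<epsilon> \<le> 1 / (S + 1)" by (simp add: \<epsilon>_def)
  then have "\<epsilon> * (S + 1) \<le> 1" using S by (simp add: le_divide_eq)
  then have small1: "\<epsilon> * S \<le> 1" using \<epsilon> by (simp add: algebra_simps)
  have "\<epsilon> \<le> 1 / (K2 + 1)" by (simp add: \<epsilon>_def)
  then have "\<epsilon> * (K2 + 1) \<le> 1" using K2 by (simp add: le_divide_eq)
  then have small2: "\<epsilon> * (S^2 * \<sigma>^2 / 2) \<le> 1" using \<epsilon> by (simp add: K2_def algebra_simps)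
  have "\<epsilon> \<le> r / (D + 2)" by (simp add: \<epsilon>_def)
  then have "\<epsilon> * (D + 2) \<le> r" using D by (simp add: le_divide_eq)
  then have "exp (\<epsilon> * (D + 2)) * q \<le> exp r * q" using q by (simp add: mult_right_mono)
  also have "\<dots> = 1" using q by (simp add: r_def exp_minus)
  finally have cdf: "exp (\<epsilon> * (D + 2)) * q \<le> 1" .
  show ?thesis
    using gaussian_barrier_step[OF \<sigma> a0 \<epsilon> _ _ small1 small2 cdf[unfolded q_def D_def]] \<epsilon> that
    by blast
qed

lemma (in prob_space) distr_innovations_eq_PiM:
  fixes Y :: "nat \<Rightarrow> 'a \<Rightarrow> real" and f :: "real \<Rightarrow> real"
  assumes indep: "indep_vars (\<lambda>_. borel) Y {1..}"
    and law: "\<And>n. n \<ge> 1 \<Longrightarrow> distributed M lborel (Y n) f" and N: "N \<ge> 1"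
  shows "distr M (PiM {1..N} (\<lambda>_. borel)) (\<lambda>\<omega>. \<lambda>k\<in>{1..N}. Y k \<omega>) = PiM {1..N} (\<lambda>_. density lborel f)"
proof -
  have rv: "random_variable borel (Y k)" if "k \<in> {1..N}" for k
    using distributed_measurable[OF law[of k]] that by simp
  have "distr M (PiM {1..N} (\<lambda>_. borel)) (\<lambda>\<omega>. \<lambda>k\<in>{1..N}. Y k \<omega>) = PiM {1..N} (\<lambda>k. distr M borel (Y k))"
    using indep_vars_iff_distr_eq_PiM'[where I="{1..N}" and M'="\<lambda>_. borel" and X=Y]
      indep_vars_subset[OF indep] rv N by auto
  also have "\<dots> = PiM {1..N} (\<lambda>_. density lborel f)"
  proof (intro PiM_cong refl)
    fix k :: nat assume "k \<in> {1..N}"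
    then have "distr M borel (Y k) = distr M lborel (Y k)" by (intro distr_cong) auto
    also have "\<dots> = density lborel f" using \<open>k \<in> {1..N}\<close> by (intro distributed_distr_eq_density law) simp
    finally show "distr M borel (Y k) = density lborel f" .
  qed
  finally show ?thesis .
qed

lemma (in prob_space) prob_barrier_event_eq:
  fixes Y :: "nat \<Rightarrow> 'a \<Rightarrow> real" and f :: "real \<Rightarrow> real" and a :: "nat \<Rightarrow> real"
  assumes indep: "indep_vars (\<lambda>_. borel) Y {1..}"
    and law: "\<And>n. n \<ge> 1 \<Longrightarrow> distributed M lborel (Y n) f" and N: "N \<ge> 1"
  shows "prob {\<omega> \<in> space M. \<forall>m\<in>{1..N}. moving_sum a (\<lambda>k. Y k \<omega>) m \<le> x}
       = measure (PiM {1..N} (\<lambda>_. density lborel f))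
           {y \<in> space (PiM {1..N} (\<lambda>_. density lborel f)). \<forall>m\<in>{1..N}. moving_sum a y m \<le> x}"
proof -
  define PB where "PB = PiM {1..N} (\<lambda>_. borel :: real measure)"
  define PN where "PN = PiM {1..N} (\<lambda>_. density lborel f)"
  define Z where "Z \<omega> = (\<lambda>k\<in>{1..N}. Y k \<omega>)" for \<omega>
  define A where "A = {y \<in> space PN. \<forall>m\<in>{1..N}. moving_sum a y m \<le> x}"
  have Z_meas: "Z \<in> measurable M PB"
    unfolding Z_def PB_def using distributed_measurable[OF law] by (intro measurable_restrict) simp
  have Z_law: "distr M PB Z = PN"
    unfolding PB_def PN_def Z_def by (rule distr_innovations_eq_PiM[OF indep law N])
  have sets_PN: "sets PN = sets PB" unfolding PN_def PB_def by (intro sets_PiM_cong) auto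
  have "A \<in> sets PN"
    unfolding A_def PN_def moving_sum_def using measurable_PiM_coordinate[of "density lborel f"] by measurable
  then have "measure PN A = prob (Z -` A \<inter> space M)"
    using Z_meas sets_PN by (simp add: Z_law[symmetric] measure_distr)
  also have "Z -` A \<inter> space M = {\<omega> \<in> space M. \<forall>m\<in>{1..N}. moving_sum a (\<lambda>k. Y k \<omega>) m \<le> x}"
  proof -
    have "moving_sum a (Z \<omega>) m = moving_sum a (\<lambda>k. Y k \<omega>) m" if "m \<in> {1..N}" for \<omega> m
      using that unfolding moving_sum_def Z_def by (intro sum.cong) auto
    moreover have "Z \<omega> \<in> space PN" for \<omega> by (simp add: PN_def Z_def space_PiM)
    ultimately show ?thesis by (auto simp: A_def)
  qed
  finally show ?thesis unfolding A_def PN_def by simp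
qed

lemma summable_subexponential_times_geometric:
  fixes \<alpha> :: "nat \<Rightarrow> real" and \<rho> :: real
  assumes \<rho>: "0 < \<rho>" "\<rho> < 1"
    and subexp: "\<And>l. l > 0 \<Longrightarrow> (\<lambda>n. exp (- l * real n) * \<alpha> n) \<longlonglongrightarrow> 0"
  shows "summable (\<lambda>n. \<alpha> n * \<rho> ^ n)"
proof -
  define l where "l = - ln \<rho> / 2"
  have l: "l > 0" using \<rho> by (simp add: l_def)
  have "Bseq (\<lambda>n. exp (- l * real n) * \<alpha> n)"
    using subexp[OF l] by (intro convergent_imp_Bseq) (auto simp: convergent_def)
  then obtain B where B: "\<And>n. norm (exp (- l * real n) * \<alpha> n) \<le> B" by (meson BseqE)
  have geometric: "exp (l * real n) * \<rho> ^ n = exp (- l) ^ n" for n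
  proof -
    have "\<rho> ^ n = exp (real n * ln \<rho>)" using \<rho> by (simp add: exp_of_nat_mult)
    then have "exp (l * real n) * \<rho> ^ n = exp (real n * (- l))"
      by (simp add: exp_add[symmetric] l_def algebra_simps)
    then show ?thesis by (simp only: exp_of_nat_mult)
  qed
  have bound: "norm (\<alpha> n * \<rho> ^ n) \<le> B * exp (- l) ^ n" for n
  proof -
    have "\<alpha> n * \<rho> ^ n = (exp (- l * real n) * \<alpha> n) * (exp (l * real n) * \<rho> ^ n)"
      by (simp add: exp_minus field_simps)
    then have "norm (\<alpha> n * \<rho> ^ n) = norm (exp (- l * real n) * \<alpha> n) * exp (- l) ^ n"
      unfolding geometric using \<rho>(1) by (simp add: abs_mult)
    also have "\<dots> \<le> B * exp (- l) ^ n" using B[of n] by (intro mult_right_mono) auto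
    finally show ?thesis .
  qed
  have "summable (\<lambda>n. B * exp (- l) ^ n)" using l by (intro summable_mult summable_geometric) simp
  then show ?thesis by (rule summable_comparison_test'[where N=0]) (rule bound)
qed

lemma shifted_partial_sum_le_suminf:
  fixes a :: "nat \<Rightarrow> real"
  assumes "summable a" "\<And>j. a j \<ge> 0"
  shows "a 0 + (\<Sum>m=n+1..N. a (m - n)) \<le> suminf a"
proof -
  have "(\<Sum>m=n+1..N. a (m - n)) = (\<Sum>j=1..N-n. a j)"
    by (rule sum.reindex_bij_witness[where i="\<lambda>j. j + n" and j="\<lambda>m. m - n"]) auto
  then have "a 0 + (\<Sum>m=n+1..N. a (m - n)) = a 0 + (\<Sum>j=1..N-n. a j)" by simp
  also have "a 0 + (\<Sum>j=1..N-n. a j) = (\<Sum>j=0..N-n. a j)"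
    by (subst (2) sum.atLeast_Suc_atMost) auto
  also have "\<dots> \<le> suminf a" using assms by (intro sum_le_suminf) auto
  finally show ?thesis .
qed

lemma liminf_log_rate_pos:
  fixes P :: "nat \<Rightarrow> real" and \<epsilon> :: real
  assumes \<epsilon>: "\<epsilon> > 0" and pos: "\<And>N. N \<ge> 1 \<Longrightarrow> 0 < P N"
    and decay: "\<And>N. N \<ge> 1 \<Longrightarrow> P N \<le> exp (- \<epsilon>) ^ N"
  shows "liminf (\<lambda>N. ereal (- ln (P N) / real N)) > 0"
proof -
  have "eventually (\<lambda>N. ereal \<epsilon> \<le> ereal (- ln (P N) / real N)) sequentially"
  proof (rule eventually_sequentiallyI[of 1])
    fix N :: nat assume N: "N \<ge> 1"
    have "ln (P N) \<le> ln (exp (- \<epsilon>) ^ N)" using pos[OF N] decay[OF N] by simp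
    also have "\<dots> = - (\<epsilon> * real N)" by (simp add: ln_realpow)
    finally have "\<epsilon> * real N \<le> - ln (P N)" by simp
    then show "ereal \<epsilon> \<le> ereal (- ln (P N) / real N)" using N by (subst ereal_less_eq(3), subst pos_le_divide_eq) auto
  qed
  then have "ereal \<epsilon> \<le> liminf (\<lambda>N. ereal (- ln (P N) / real N))" by (rule Liminf_bounded)
  then show ?thesis using \<epsilon> by (simp add: less_le_trans[of 0 "ereal \<epsilon>"])
qed

lemma gaussian_persistence_rate:
  fixes a :: "nat \<Rightarrow> real" and \<mu> \<sigma> x :: real
  defines "Nd \<equiv> density lborel (normal_density \<mu> \<sigma>)"
  assumes \<sigma>: "\<sigma> > 0" and a_pos: "\<And>j. a j > 0" and a_summable: "summable a"
  obtains \<epsilon> where "\<epsilon> > 0"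
    and "\<And>N. 0 < measure (PiM {1..N} (\<lambda>_. Nd)) {y \<in> space (PiM {1..N} (\<lambda>_. Nd)). \<forall>m\<in>{1..N}. moving_sum a y m \<le> x}"
    and "\<And>N. measure (PiM {1..N} (\<lambda>_. Nd)) {y \<in> space (PiM {1..N} (\<lambda>_. Nd)). \<forall>m\<in>{1..N}. moving_sum a y m \<le> x}
           \<le> exp (- \<epsilon>) ^ N"
proof -
  have S: "suminf a \<ge> 0" using a_summable a_pos by (simp add: less_imp_le suminf_nonneg)
  obtain \<epsilon> where \<epsilon>: "\<epsilon> > 0" and rate: "\<And>\<beta> R. 0 \<le> \<beta> \<Longrightarrow> \<beta> + \<epsilon> * a 0 \<le> \<epsilon> * suminf a \<Longrightarrow>
      barrier_factor Nd (a 0) x \<epsilon> \<beta> R \<le> ennreal (exp (- \<epsilon>))"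
    using gaussian_barrier_rate[OF \<sigma> a_pos[of 0] S, where \<mu>=\<mu> and x=x] unfolding Nd_def by blast
  have Nd: "prob_space Nd" "sets Nd = sets borel"
    unfolding Nd_def by (simp_all add: prob_space_normal_density[OF \<sigma>])
  interpret Nd: prob_space Nd by (rule Nd(1))
  have tail: "emeasure Nd {..c} > 0" for c
    using measure_normal_atMost_bounds(1)[OF \<sigma>, of \<mu> c] unfolding Nd_def[symmetric]
    by (simp add: Nd.emeasure_eq_measure)
  have step: "barrier_factor Nd (a 0) x \<epsilon> (\<epsilon> * (\<Sum>m=n+1..N. a (m - n))) R \<le> ennreal (exp (- \<epsilon>))" for n N R
  proof (rule rate)
    show "0 \<le> \<epsilon> * (\<Sum>m=n+1..N. a (m - n))"
      using \<epsilon> a_pos by (intro mult_nonneg_nonneg sum_nonneg) (auto intro: less_imp_le)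
    have "\<epsilon> * (a 0 + (\<Sum>m=n+1..N. a (m - n))) \<le> \<epsilon> * suminf a"
      using shifted_partial_sum_le_suminf[OF a_summable, of n N] a_pos \<epsilon>
      by (intro mult_left_mono) (auto intro: less_imp_le)
    then show "\<epsilon> * (\<Sum>m=n+1..N. a (m - n)) + \<epsilon> * a 0 \<le> \<epsilon> * suminf a" by (simp add: algebra_simps)
  qed
  show ?thesis
  proof (rule that[OF \<epsilon>])
    show "0 < measure (PiM {1..N} (\<lambda>_. Nd)) {y \<in> space (PiM {1..N} (\<lambda>_. Nd)). \<forall>m\<in>{1..N}. moving_sum a y m \<le> x}"
      for N using a_pos by (intro measure_barrier_event_pos[OF Nd tail]) (auto intro: less_imp_le)
    show "measure (PiM {1..N} (\<lambda>_. Nd)) {y \<in> space (PiM {1..N} (\<lambda>_. Nd)). \<forall>m\<in>{1..N}. moving_sum a y m \<le> x}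
        \<le> exp (- \<epsilon>) ^ N" for N
      using step by (intro measure_barrier_event_le[OF Nd]) auto
  qed
qed

theorem mainTheorem13:
  fixes M :: "'a measure" and Y :: "nat \<Rightarrow> 'a \<Rightarrow> real"
    and \<alpha> :: "nat \<Rightarrow> real" and \<rho> \<mu> \<sigma> C x :: real
  assumes "prob_space M"
    and "prob_space.indep_vars M (\<lambda>_. borel) Y {1..}"
    and "\<sigma> > 0"
    and "\<And>n. n \<ge> 1 \<Longrightarrow> distributed M lborel (Y n) (normal_density \<mu> \<sigma>)"
    and "0 < \<rho>" and "\<rho> < 1"
    and "\<And>n. \<alpha> n > 0"
    and "\<And>n m. \<alpha> (n + m) \<le> C * \<alpha> n * \<alpha> m"
    and "\<And>l. l > 0 \<Longrightarrow> (\<lambda>n. exp (- l * real n) * \<alpha> n) \<longlonglongrightarrow> 0"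
  defines "X \<equiv> (\<lambda>n \<omega>. \<Sum>k=1..n. \<alpha> (n - k) * \<rho> ^ (n - k) * Y k \<omega>)"
  shows "liminf (\<lambda>N. ereal (- ln (measure M {\<omega> \<in> space M. \<forall>n\<in>{1..N}. X n \<omega> \<le> x}) / real N)) > 0"
proof -
  interpret prob_space M by (rule assms(1))
  define a where "a j = \<alpha> j * \<rho> ^ j" for j
  define Nd where "Nd = density lborel (normal_density \<mu> \<sigma>)"
  have a_pos: "a j > 0" for j using assms(5,7) by (simp add: a_def)
  have a_summable: "summable a"
    unfolding a_def by (rule summable_subexponential_times_geometric[OF assms(5,6,9)])
  obtain \<epsilon> where \<epsilon>: "\<epsilon> > 0"
    and pos: "\<And>N. 0 < measure (PiM {1..N} (\<lambda>_. Nd)) {y \<in> space (PiM {1..N} (\<lambda>_. Nd)). \<forall>m\<in>{1..N}. moving_sum a y m \<le> x}"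
    and decay: "\<And>N. measure (PiM {1..N} (\<lambda>_. Nd)) {y \<in> space (PiM {1..N} (\<lambda>_. Nd)). \<forall>m\<in>{1..N}. moving_sum a y m \<le> x}
                  \<le> exp (- \<epsilon>) ^ N"
    using gaussian_persistence_rate[OF assms(3) a_pos a_summable, where \<mu>=\<mu> and x=x] unfolding Nd_def by blast
  have X_eq: "X n \<omega> = moving_sum a (\<lambda>k. Y k \<omega>) n" for n \<omega>
    unfolding X_def moving_sum_def a_def ..
  have prob_eq: "measure M {\<omega> \<in> space M. \<forall>n\<in>{1..N}. X n \<omega> \<le> x}
      = measure (PiM {1..N} (\<lambda>_. Nd)) {y \<in> space (PiM {1..N} (\<lambda>_. Nd)). \<forall>m\<in>{1..N}. moving_sum a y m \<le> x}"
    if "N \<ge> 1" for N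
    unfolding X_eq Nd_def by (rule prob_barrier_event_eq[OF assms(2,4) that])
  show ?thesis
  proof (rule liminf_log_rate_pos[OF \<epsilon>])
    fix N :: nat assume N: "N \<ge> 1"
    show "0 < measure M {\<omega> \<in> space M. \<forall>n\<in>{1..N}. X n \<omega> \<le> x}"
      unfolding prob_eq[OF N] by (rule pos)
    show "measure M {\<omega> \<in> space M. \<forall>n\<in>{1..N}. X n \<omega> \<le> x} \<le> exp (- \<epsilon>) ^ N"
      unfolding prob_eq[OF N] by (rule decay)
  qed
qed

end
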